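(* Let $R$ be a Noetherian ring and let $N \subsetneq M$ be finitely generated $R$-modules with $\operatorname{Ass}(M/N)=\{P_1,P_2,\dots,P_s\}$ (the $P_i$ distinct). Suppose that for each $i=1,2,\dots,s$, $Q_i$ is a $P_i$-primary component of $N$ in $M$, i.e. $Q_i\in\Lambda_{P_i}(N\subsetneq M)$. Then $N=Q_1\cap Q_2\cap\cdots\cap Q_s$, and this is an irredundant and minimal primary decomposition of $N$ in $M$.
   Context: A submodule $Q\subseteq M$ is $P$-primary if $\operatorname{Ass}(M/Q)=\{P\}$. A primary decomposition of $N$ in $M$ means an irredundant and minimal primary decomposition $N=Q_1\cap\cdots\cap Q_s$ with $Q_i$ being $P_i$-primary, the $P_i$ distinct; then $\operatorname{Ass}(M/N)=\{P_1,\dots,P_s\}$ and $Q_i$ is called a $P_i$-primary component of $N$ in $M$. For $P\in\operatorname{Ass}(M/N)$, $\Lambda_P(N\subsetneq M)$ denotes the set of all $P$-primary submodules $Q$ of $M$ that occur as the $P$-primary component in some (irredundant, minimal) primary decomposition of $N$ in $M$. *)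

theory Defs
  imports Complex_Main
begin

text \<open>Modules M, N are submodules
  (sets) of an ambient module type 'm.  Ideals of 'r are the submodules of 'r
  regarded as a module over itself.\<close>

definition noetherian_ring :: "'r::comm_ring_1 itself \<Rightarrow> bool" where
  "noetherian_ring _ \<longleftrightarrow>
     (\<forall>I :: 'r set. module.subspace ((*) :: 'r \<Rightarrow> 'r \<Rightarrow> 'r) I \<longrightarrow>
        (\<exists>F. finite F \<and> module.span ((*) :: 'r \<Rightarrow> 'r \<Rightarrow> 'r) F = I))"

definition prime_ideal :: "'r::comm_ring_1 set \<Rightarrow> bool" where
  "prime_ideal P \<longleftrightarrow> module.subspace ((*) :: 'r \<Rightarrow> 'r \<Rightarrow> 'r) P \<and> P \<noteq> UNIV \<and>
     (\<forall>a b. a * b \<in> P \<longrightarrow> a \<in> P \<or> b \<in> P)"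

definition fin_gen_submodule :: "('r::comm_ring_1 \<Rightarrow> 'm::ab_group_add \<Rightarrow> 'm) \<Rightarrow> 'm set \<Rightarrow> bool" where
  "fin_gen_submodule scale M \<longleftrightarrow> module.subspace scale M \<and>
     (\<exists>F. finite F \<and> F \<subseteq> M \<and> module.span scale F = M)"

text \<open>Ass(M/N): primes that are annihilators of some element x + N of M/N,
  i.e. P = (N :_R x) = {r. r x \<in> N} for some x \<in> M.\<close>
definition Ass :: "('r::comm_ring_1 \<Rightarrow> 'm::ab_group_add \<Rightarrow> 'm) \<Rightarrow> 'm set \<Rightarrow> 'm set \<Rightarrow> 'r set set" where
  "Ass scale M N = {P. prime_ideal P \<and> (\<exists>x\<in>M. P = {r. scale r x \<in> N})}"

definition primary_submodule ::
  "('r::comm_ring_1 \<Rightarrow> 'm::ab_group_add \<Rightarrow> 'm) \<Rightarrow> 'm set \<Rightarrow> 'm set \<Rightarrow> 'r set \<Rightarrow> bool" where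
  "primary_submodule scale M Q P \<longleftrightarrow>
     module.subspace scale Q \<and> Q \<subseteq> M \<and> Ass scale M Q = {P}"

definition primary_decomposition ::
  "('r::comm_ring_1 \<Rightarrow> 'm::ab_group_add \<Rightarrow> 'm) \<Rightarrow> 'm set \<Rightarrow> 'm set \<Rightarrow> nat \<Rightarrow>
   (nat \<Rightarrow> 'm set) \<Rightarrow> (nat \<Rightarrow> 'r set) \<Rightarrow> bool" where
  "primary_decomposition scale M N s Q P \<longleftrightarrow>
     (\<forall>i\<in>{1..s}. primary_submodule scale M (Q i) (P i)) \<and>
     inj_on P {1..s} \<and>
     N = (\<Inter>i\<in>{1..s}. Q i) \<and>
     (\<forall>i\<in>{1..s}. M \<inter> (\<Inter>j\<in>{1..s} - {i}. Q j) \<noteq> N)"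

definition Lambda ::
  "('r::comm_ring_1 \<Rightarrow> 'm::ab_group_add \<Rightarrow> 'm) \<Rightarrow> 'r set \<Rightarrow> 'm set \<Rightarrow> 'm set \<Rightarrow> 'm set set" where
  "Lambda scale P N M = {Q'. \<exists>s Q P' i. primary_decomposition scale M N s Q P' \<and>
       i \<in> {1..s} \<and> P' i = P \<and> Q i = Q' \<and> primary_submodule scale M Q' P}"

end

theory Submission
  imports Defs
begin

text \<open>Every component Q_i contains N, so N \<subseteq> Q_1 \<inter> \<dots> \<inter> Q_s.  Conversely, if some y \<in> M
  lies in all Q_i but not in N, then, R being Noetherian, y can be chosen with (N :_R y) maximal
  among such annihilators, hence prime, hence equal to some P_k.  Writing N = \<Inter>_j Q'_j for the
  decomposition in which Q_k = Q'_k occurs, (N :_R y) = \<Inter>_j (Q'_j :_R y), and prime avoidance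
  forces (N :_R y) = (Q'_j :_R y) \<in> Ass(M/Q'_j) = {P'_j} for some j with y \<notin> Q'_j; since the P'_j
  are distinct, j = k, contradicting y \<in> Q_k.  The same prime avoidance argument shows that
  dropping any Q_i loses the associated prime P_i, which gives irredundancy.\<close>

lemma module_times: "module ((*) :: 'r::comm_ring_1 \<Rightarrow> 'r \<Rightarrow> 'r)"
  by unfold_locales (auto simp: algebra_simps)

lemma prime_ideal_one_notin:
  fixes P :: "'r::comm_ring_1 set"
  assumes "prime_ideal P"
  shows "1 \<notin> P"
proof
  assume "1 \<in> P"
  then have "r \<in> P" for r
    using assms module.subspace_scale[OF module_times, of P 1 r]
    by (simp add: prime_ideal_def)
  then show False
    using assms by (auto simp: prime_ideal_def)
qed

lemma prime_ideal_prod_mem: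
  fixes P :: "'r::comm_ring_1 set"
  assumes "prime_ideal P" "finite A" "prod f A \<in> P"
  shows "\<exists>j\<in>A. f j \<in> P"
  using assms(2,3)
proof (induction A rule: finite_induct)
  case empty
  then show ?case
    using prime_ideal_one_notin[OF assms(1)] by simp
next
  case (insert a A)
  then show ?case
    using assms(1) by (auto simp: prime_ideal_def)
qed

lemma subspace_colon:
  fixes scale :: "'r::comm_ring_1 \<Rightarrow> 'm::ab_group_add \<Rightarrow> 'm"
  assumes "module scale" "module.subspace scale N"
  shows "module.subspace ((*) :: 'r \<Rightarrow> 'r \<Rightarrow> 'r) {r. scale r x \<in> N}"
  using module.subspace_0[OF assms] module.subspace_add[OF assms] module.subspace_scale[OF assms]
  by (auto simp: module.subspace_def[OF module_times] module.scale_left_distrib[OF assms(1)]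
      module.scale_zero_left[OF assms(1)]
      module.scale_scale[OF assms(1), symmetric])

lemma subspace_Union_chain:
  assumes "module scale" "C \<noteq> {}" "subset.chain A C" "\<forall>X\<in>C. module.subspace scale X"
  shows "module.subspace scale (\<Union>C)"
proof -
  have "x + y \<in> \<Union>C" if xy: "x \<in> \<Union>C" "y \<in> \<Union>C" for x y
  proof -
    obtain X Y where "X \<in> C" "Y \<in> C" "x \<in> X" "y \<in> Y"
      using xy by blast
    moreover have "X \<subseteq> Y \<or> Y \<subseteq> X"
      using assms(3) \<open>X \<in> C\<close> \<open>Y \<in> C\<close> by (auto simp: subset_chain_def)
    ultimately show ?thesis
      using assms(4) module.subspace_add[OF assms(1)] by blast
  qed
  then show ?thesis
    using assms module.subspace_0[OF assms(1)] module.subspace_scale[OF assms(1)]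
    unfolding module.subspace_def[OF assms(1), of "\<Union>C"] by blast
qed

lemma noetherian_ring_ex_maximal:
  fixes Fam :: "'r::comm_ring_1 set set"
  assumes "noetherian_ring TYPE('r)" "Fam \<noteq> {}"
    and "\<forall>I\<in>Fam. module.subspace ((*) :: 'r \<Rightarrow> 'r \<Rightarrow> 'r) I"
  shows "\<exists>I\<in>Fam. \<forall>J\<in>Fam. I \<subseteq> J \<longrightarrow> J = I"
proof (rule subset_Zorn_nonempty[OF assms(2)])
  fix C assume C: "C \<noteq> {}" "subset.chain Fam C"
  then have "module.subspace ((*) :: 'r \<Rightarrow> 'r \<Rightarrow> 'r) (\<Union>C)"
    using assms(3) by (intro subspace_Union_chain[OF module_times]) (auto simp: subset_chain_def)
  then obtain F where F: "finite F" "module.span (*) F = \<Union>C"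
    using assms(1) by (auto simp: noetherian_ring_def)
  then obtain B where B: "B \<in> C" "F \<subseteq> B"
    using module.span_superset[OF module_times, of F] finite_subset_Union_chain[OF _ _ C]
    by metis
  then have "\<Union>C \<subseteq> B"
    using F(2) module.span_minimal[OF module_times] C(2) assms(3)
    by (metis subset_chain_def subsetD)
  then show "\<Union>C \<in> Fam"
    using B C(2) by (metis Union_upper subset_antisym subset_chain_def subsetD)
qed

lemma prime_ideal_maximal_colon:
  fixes scale :: "'r::comm_ring_1 \<Rightarrow> 'm::ab_group_add \<Rightarrow> 'm"
  assumes md: "module scale" and S: "module.subspace scale S" and N: "module.subspace scale N"
    and y: "y \<in> S - N"
    and max: "\<forall>z\<in>S - N. {r. scale r y \<in> N} \<subseteq> {r. scale r z \<in> N} \<longrightarrow>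
                {r. scale r z \<in> N} = {r. scale r y \<in> N}"
  shows "prime_ideal {r. scale r y \<in> N}"
  unfolding prime_ideal_def
proof (intro conjI allI impI)
  show "module.subspace (*) {r. scale r y \<in> N}"
    by (rule subspace_colon[OF md N])
  have "1 \<notin> {r. scale r y \<in> N}"
    using y module.scale_one[OF md] by simp
  then show "{r. scale r y \<in> N} \<noteq> UNIV"
    by blast
next
  fix a b assume ab: "a * b \<in> {r. scale r y \<in> N}"
  show "a \<in> {r. scale r y \<in> N} \<or> b \<in> {r. scale r y \<in> N}"
  proof (cases "a \<in> {r. scale r y \<in> N}")
    case False
    then have z: "scale a y \<in> S - N"
      using y module.subspace_scale[OF md S] by auto
    have "{r. scale r y \<in> N} \<subseteq> {r. scale r (scale a y) \<in> N}"
      using module.subspace_scale[OF md N, of "scale _ y" a]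
      by (auto simp: module.scale_left_commute[OF md, of a])
    then have "{r. scale r (scale a y) \<in> N} = {r. scale r y \<in> N}"
      using max z by blast
    moreover have "scale b (scale a y) \<in> N"
      using ab by (simp add: module.scale_scale[OF md] mult.commute)
    ultimately show ?thesis
      by blast
  qed simp
qed

lemma ex_prime_colon:
  fixes scale :: "'r::comm_ring_1 \<Rightarrow> 'm::ab_group_add \<Rightarrow> 'm"
  assumes md: "module scale" and noeth: "noetherian_ring TYPE('r)"
    and S: "module.subspace scale S" and N: "module.subspace scale N" and "\<not> S \<subseteq> N"
  shows "\<exists>y\<in>S - N. prime_ideal {r. scale r y \<in> N}"
proof -
  let ?Fam = "(\<lambda>y. {r. scale r y \<in> N}) ` (S - N)"
  have "\<exists>I\<in>?Fam. \<forall>J\<in>?Fam. I \<subseteq> J \<longrightarrow> J = I"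
  proof (rule noetherian_ring_ex_maximal[OF noeth])
    show "?Fam \<noteq> {}"
      using \<open>\<not> S \<subseteq> N\<close> by blast
    show "\<forall>I\<in>?Fam. module.subspace (*) I"
      by (auto intro: subspace_colon[OF md N])
  qed
  then obtain I where "I \<in> ?Fam" and max: "\<forall>J\<in>?Fam. I \<subseteq> J \<longrightarrow> J = I"
    by blast
  then obtain y where y: "y \<in> S - N" and I: "I = {r. scale r y \<in> N}"
    by blast
  have "prime_ideal {r. scale r y \<in> N}"
    using max by (intro prime_ideal_maximal_colon[OF md S N y]) (simp add: I)
  then show ?thesis
    using y by blast
qed

text \<open>Prime avoidance: a prime equal to \<Inter>_j (Q_j :_R x) contains, hence equals, one of the (Q_j :_R x).\<close>

lemma prime_colon_Inter_primary:
  fixes scale :: "'r::comm_ring_1 \<Rightarrow> 'm::ab_group_add \<Rightarrow> 'm"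
  assumes md: "module scale" and fin: "finite A" and x: "x \<in> M"
    and prime: "prime_ideal P" and P: "P = {r. \<forall>j\<in>A. scale r x \<in> Q j}"
    and primary: "\<forall>j\<in>A. primary_submodule scale M (Q j) (PP j)"
  shows "\<exists>j\<in>A. x \<notin> Q j \<and> P = PP j"
proof -
  have "\<exists>j\<in>A. {r. scale r x \<in> Q j} \<subseteq> P"
  proof (rule ccontr)
    assume "\<not> ?thesis"
    then have "\<forall>j\<in>A. \<exists>a. scale a x \<in> Q j \<and> a \<notin> P"
      by blast
    then obtain f where f: "\<forall>j\<in>A. scale (f j) x \<in> Q j \<and> f j \<notin> P"
      by metis
    have "scale (prod f A) x \<in> Q j" if j: "j \<in> A" for j
    proof -
      have "scale (prod f A) x = scale (prod f (A - {j})) (scale (f j) x)"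
        using prod.remove[OF fin j, of f] by (simp add: module.scale_scale[OF md] mult.commute)
      moreover have "module.subspace scale (Q j)"
        using primary j by (simp add: primary_submodule_def)
      ultimately show ?thesis
        using f j module.subspace_scale[OF md] by metis
    qed
    then have "prod f A \<in> P"
      using P by blast
    then show False
      using prime_ideal_prod_mem[OF prime fin] f by blast
  qed
  then obtain j where j: "j \<in> A" "P = {r. scale r x \<in> Q j}"
    using P by blast
  then have "P \<in> Ass scale M (Q j)"
    using prime x by (auto simp: Ass_def)
  moreover have "x \<notin> Q j"
    using j prime_ideal_one_notin[OF prime] module.scale_one[OF md] by auto
  ultimately show ?thesis
    using j primary by (auto simp: primary_submodule_def)
qed

lemma primary_decomposition_prime_colon:
  fixes scale :: "'r::comm_ring_1 \<Rightarrow> 'm::ab_group_add \<Rightarrow> 'm"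
  assumes md: "module scale" and dec: "primary_decomposition scale M N s Q P"
    and y: "y \<in> M" and prime: "prime_ideal {r. scale r y \<in> N}"
    and k: "k \<in> {1..s}" "P k = {r. scale r y \<in> N}"
  shows "y \<notin> Q k"
proof -
  have "{r. scale r y \<in> N} = {r. \<forall>j\<in>{1..s}. scale r y \<in> Q j}"
    using dec by (auto simp: primary_decomposition_def)
  then obtain j where "j \<in> {1..s}" "y \<notin> Q j" "P j = P k"
    using prime_colon_Inter_primary[OF md _ y prime, of "{1..s}" Q P] dec k(2)
    by (auto simp: primary_decomposition_def)
  moreover have "inj_on P {1..s}"
    using dec by (simp add: primary_decomposition_def)
  ultimately show ?thesis
    using k(1) inj_onD by metis
qed

lemma Lambda_obtains_decomposition:
  assumes "Q \<in> Lambda scale P N M"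
  obtains s Q' P' k where "primary_decomposition scale M N s Q' P'" "k \<in> {1..s}"
    "P' k = P" "Q' k = Q"
  using assms by (auto simp: Lambda_def)

lemma Lambda_primary:
  assumes "Q \<in> Lambda scale P N M"
  shows "primary_submodule scale M Q P"
  using assms by (auto simp: Lambda_def)

lemma Lambda_supset:
  assumes "Q \<in> Lambda scale P N M"
  shows "N \<subseteq> Q"
  using assms by (auto simp: Lambda_def primary_decomposition_def)

lemma Inter_Lambda_subset:
  fixes scale :: "'r::comm_ring_1 \<Rightarrow> 'm::ab_group_add \<Rightarrow> 'm"
  assumes md: "module scale" and noeth: "noetherian_ring TYPE('r)"
    and M: "module.subspace scale M" and N: "module.subspace scale N"
    and Ass: "Ass scale M N = P ` {1..s}"
    and Lambda: "\<forall>i\<in>{1..s}. Q i \<in> Lambda scale (P i) N M"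
  shows "M \<inter> (\<Inter>i\<in>{1..s}. Q i) \<subseteq> N"
proof (rule ccontr)
  assume not_sub: "\<not> ?thesis"
  have "module.subspace scale (Q i)" if "i \<in> {1..s}" for i
    using Lambda_primary[of "Q i" scale "P i" N M] Lambda that
    by (simp add: primary_submodule_def)
  then have "module.subspace scale (M \<inter> (\<Inter>i\<in>{1..s}. Q i))"
    using M by (intro module.subspace_inter[OF md] module.subspace_Int[OF md])
  then obtain y where "y \<in> M \<inter> (\<Inter>i\<in>{1..s}. Q i) - N"
    and prime: "prime_ideal {r. scale r y \<in> N}"
    using ex_prime_colon[OF md noeth _ N not_sub] by blast
  then have y: "y \<in> M" "\<forall>i\<in>{1..s}. y \<in> Q i"
    by auto
  have "{r. scale r y \<in> N} \<in> Ass scale M N"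
    using y(1) prime by (auto simp: Ass_def)
  then obtain k where k: "k \<in> {1..s}" "P k = {r. scale r y \<in> N}"
    using Ass by (metis imageE)
  have "Q k \<in> Lambda scale (P k) N M"
    using Lambda k(1) by blast
  then obtain s' Q' P' k' where dec: "primary_decomposition scale M N s' Q' P'"
    and k': "k' \<in> {1..s'}" and "P' k' = P k" "Q' k' = Q k"
    by (rule Lambda_obtains_decomposition)
  then have "y \<notin> Q k"
    using primary_decomposition_prime_colon[OF md dec y(1) prime k'] k(2) by simp
  then show False
    using y(2) k(1) by blast
qed

lemma Inter_primary_irredundant:
  fixes scale :: "'r::comm_ring_1 \<Rightarrow> 'm::ab_group_add \<Rightarrow> 'm"
  assumes md: "module scale" and M: "module.subspace scale M"
    and fin: "finite A" and Ass: "Ass scale M N = P ` A" and inj: "inj_on P A"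
    and primary: "\<forall>j\<in>A. primary_submodule scale M (Q j) (P j)" and i: "i \<in> A"
  shows "M \<inter> (\<Inter>j\<in>A - {i}. Q j) \<noteq> N"
proof
  assume N: "M \<inter> (\<Inter>j\<in>A - {i}. Q j) = N"
  have "P i \<in> Ass scale M N"
    using Ass i by blast
  then obtain x where x: "x \<in> M" "prime_ideal (P i)" "P i = {r. scale r x \<in> N}"
    by (auto simp: Ass_def)
  have "scale r x \<in> N \<longleftrightarrow> (\<forall>j\<in>A - {i}. scale r x \<in> Q j)" for r
    using N module.subspace_scale[OF md M x(1)] by blast
  then have "P i = {r. \<forall>j\<in>A - {i}. scale r x \<in> Q j}"
    using x(3) by simp
  moreover have "finite (A - {i})"
    using fin by simp
  ultimately obtain j where "j \<in> A - {i}" "P i = P j"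
    using prime_colon_Inter_primary[OF md _ x(1,2)] primary by blast
  then show False
    using inj i by (auto dest: inj_onD)
qed

theorem theorem1p1:
  fixes scale :: "'r::comm_ring_1 \<Rightarrow> 'm::ab_group_add \<Rightarrow> 'm"
    and M N :: "'m set" and s :: nat
    and P :: "nat \<Rightarrow> 'r set" and Q :: "nat \<Rightarrow> 'm set"
  assumes "module scale"
    and "noetherian_ring TYPE('r)"
    and "fin_gen_submodule scale M"
    and "fin_gen_submodule scale N"
    and "N \<subset> M"
    and "Ass scale M N = P ` {1..s}"
    and "inj_on P {1..s}"
    and "\<forall>i\<in>{1..s}. Q i \<in> Lambda scale (P i) N M"
  shows "N = (\<Inter>i\<in>{1..s}. Q i) \<and> primary_decomposition scale M N s Q P"
proof -
  have M: "module.subspace scale M" and N: "module.subspace scale N"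
    using assms(3,4) by (auto simp: fin_gen_submodule_def)
  have primary: "\<forall>i\<in>{1..s}. primary_submodule scale M (Q i) (P i)"
    using assms(8) Lambda_primary by blast
  have "M \<inter> (\<Inter>i\<in>{1..s}. Q i) = N"
    using Inter_Lambda_subset[OF assms(1,2) M N assms(6,8)] Lambda_supset assms(5,8) by blast
  moreover have "1 \<in> {1..s}"
    using calculation assms(5) by (cases "s = 0") auto
  then have "(\<Inter>i\<in>{1..s}. Q i) \<subseteq> Q 1" "Q 1 \<subseteq> M"
    using primary by (auto simp: primary_submodule_def)
  ultimately have "N = (\<Inter>i\<in>{1..s}. Q i)"
    by blast
  then show ?thesis
    using primary assms(7) Inter_primary_irredundant[OF assms(1) M _ assms(6,7) primary]
    by (auto simp: primary_decomposition_def)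
qed

end
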